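(* Let $p_0,p_1,\dots$ be a special sequence in $C([-1,1])$ and for $i\ge1$ let $g_i(t)=\int_0^t[1+p_i(s)]\,ds$ for $t\in[-1,1]$. If $R$ is a tournament on $[n]$ and $\varepsilon>0$, then there exists $(f_1,\dots,f_n)\in\mathcal G_0^n$ such that (1) $\|f_i-g_i\|<\varepsilon$ (sup norm) for $i\in[n]$; (2) for $i\in[n]$ and $t\in[-1,1]$, $1/3<f_i'(t)<3$; (3) for distinct $i,j\in[n]$, $f_j\circ f_i^{-1}\in\mathcal G_+$ if and only if $(i,j)\in R$.
   Context: $\mathcal G$ is the group of strictly increasing continuous maps $f:[-1,1]\to[-1,1]$ with $f(\pm1)=\pm1$; $\mathcal G_0=\{f\in\mathcal G:\int_{-1}^1f=0\}$, $\mathcal G_+=\{f\in\mathcal G:\int_{-1}^1f>0\}$. A tournament on $[n]$ is $R\subset[n]\times[n]$ with no diagonal pairs and exactly one of $(i,j),(j,i)$ for each distinct $i,j$. A special sequence is a sequence $p_0,p_1,\dots$ of nonzero continuously differentiable functions on $[-1,1]$ such that: every $p_i$ is even and $p_0=1$; $\int_{-1}^1p_i(t)p_j(t)\,dt=0$ for $i\ne j$; $\sup_t|p_i(t)|\le\tfrac12$ for $i>0$; and $p_i(\pm1)=0$ for $i>0$. *)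

theory Defs
  imports "HOL-Analysis.Analysis"
begin

text \<open>The group G of increasing homeomorphisms of [-1,1] fixing the endpoints
  (functions real => real, only their values on [-1,1] matter).\<close>
definition homG :: "(real \<Rightarrow> real) set" where
  "homG = {f. continuous_on {-1..1} f \<and> strict_mono_on {-1..1} f
              \<and> f ` {-1..1} \<subseteq> {-1..1} \<and> f (-1) = -1 \<and> f 1 = 1}"

definition homG0 :: "(real \<Rightarrow> real) set" where
  "homG0 = {f \<in> homG. integral {-1..1} f = 0}"

definition homGplus :: "(real \<Rightarrow> real) set" where
  "homGplus = {f \<in> homG. integral {-1..1} f > 0}"

definition tournament :: "nat \<Rightarrow> (nat \<times> nat) set \<Rightarrow> bool" where
  "tournament n R \<longleftrightarrow> R \<subseteq> {1..n} \<times> {1..n} \<and> (\<forall>i. (i, i) \<notin> R)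
     \<and> (\<forall>i\<in>{1..n}. \<forall>j\<in>{1..n}. i \<noteq> j \<longrightarrow> ((i, j) \<in> R \<longleftrightarrow> (j, i) \<notin> R))"

definition C1_on_interval :: "(real \<Rightarrow> real) \<Rightarrow> bool" where
  "C1_on_interval p \<longleftrightarrow> (\<exists>D. continuous_on {-1..1} D \<and>
      (\<forall>t\<in>{-1..1}. (p has_real_derivative D t) (at t within {-1..1})))"

definition special_sequence :: "(nat \<Rightarrow> real \<Rightarrow> real) \<Rightarrow> bool" where
  "special_sequence p \<longleftrightarrow>
     (\<forall>i. C1_on_interval (p i) \<and> (\<exists>t\<in>{-1..1}. p i t \<noteq> 0)
          \<and> (\<forall>t\<in>{-1..1}. p i (-t) = p i t))
   \<and> (\<forall>t\<in>{-1..1}. p 0 t = 1)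
   \<and> (\<forall>i j. i \<noteq> j \<longrightarrow> integral {-1..1} (\<lambda>t. p i t * p j t) = 0)
   \<and> (\<forall>i>0. (\<forall>t\<in>{-1..1}. \<bar>p i t\<bar> \<le> 1/2) \<and> p i (-1) = 0 \<and> p i 1 = 0)"

definition oint :: "(real \<Rightarrow> real) \<Rightarrow> real \<Rightarrow> real \<Rightarrow> real" where
  "oint h a b = (if a \<le> b then integral {a..b} h else - integral {b..a} h)"

end

theory Submission
  imports Defs
begin

(* Let g_i be the primitive of 1 + p_i vanishing at 0. Since p_i is even, g_i is odd, so
   g_i lies in G_0 and the substitution s = g_i(x) turns the integral of g_j o g_i^-1 into the
   integral of g_i' g_j, which vanishes because the integrand is odd. We perturb
   f_i = g_i + delta h_i with h_i a combination of the p_k, k <> i, vanishing at the endpoints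
   and of mean zero. Integrating by parts, the integral of f_j o f_i^-1 becomes
   delta (<g_i', h_j> - <g_j', h_i>) + O(delta^2), and by the orthogonality of the p_k the first
   order term is <p_i, h_j> - <p_j, h_i>; choosing the coefficient of p_k in h_i to be
   +-1/(2 |p_k|^2) according to the orientation of the edge between i and k makes it +-1 as
   prescribed by R. *)

section \<open>Calculus on an interval\<close>

lemma integral_odd_eq_0:
  fixes f :: "real \<Rightarrow> real"
  assumes "\<And>t. t \<in> {-a..a} \<Longrightarrow> f (-t) = - f t"
  shows "integral {-a..a} f = 0"
proof -
  have "integral {-a..a} f = integral {-a..a} (\<lambda>t. f (-t))"
    using Henstock_Kurzweil_Integration.integral_reflect_real[of a "-a" f] by simp
  also have "\<dots> = integral {-a..a} (\<lambda>t. - f t)"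
    by (rule integral_cong) (use assms in auto)
  finally show ?thesis by simp
qed

lemma has_integral_derivative_mult_vanishing:
  fixes h h' G g :: "real \<Rightarrow> real"
  assumes "a \<le> b" "h a = 0" "h b = 0" "continuous_on {a..b} g" "continuous_on {a..b} h"
    and "\<And>t. t \<in> {a..b} \<Longrightarrow> (h has_real_derivative h' t) (at t within {a..b})"
    and "\<And>t. t \<in> {a..b} \<Longrightarrow> (G has_real_derivative g t) (at t within {a..b})"
  shows "((\<lambda>x. h' x * G x) has_integral - integral {a..b} (\<lambda>x. g x * h x)) {a..b}"
proof -
  have "((\<lambda>t. g t * h t + h' t * G t) has_integral G b * h b - G a * h a) {a..b}"
  proof (rule fundamental_theorem_of_calculus[OF assms(1)])
    fix t assume "t \<in> {a..b}"
    then have "((\<lambda>x. G x * h x) has_real_derivative g t * h t + h' t * G t) (at t within {a..b})"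
      using DERIV_mult[OF assms(7,6)] by (simp add: mult.commute)
    then show "((\<lambda>x. G x * h x) has_vector_derivative g t * h t + h' t * G t) (at t within {a..b})"
      by (simp add: has_real_derivative_iff_has_vector_derivative)
  qed
  moreover have "((\<lambda>t. g t * h t) has_integral integral {a..b} (\<lambda>x. g x * h x)) {a..b}"
    using assms(4,5) by (intro integrable_integral integrable_continuous_interval continuous_intros)
  ultimately have "((\<lambda>t. (g t * h t + h' t * G t) - g t * h t) has_integral
      (G b * h b - G a * h a) - integral {a..b} (\<lambda>x. g x * h x)) {a..b}"
    by (rule has_integral_diff)
  then show ?thesis using assms(2,3) by simp
qed

lemma strict_mono_on_inv_into:
  fixes f :: "'a::linorder \<Rightarrow> 'b::linorder"
  assumes "strict_mono_on S f"
  shows "strict_mono_on (f ` S) (inv_into S f)"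
proof (rule strict_mono_onI)
  fix r s assume "r \<in> f ` S" "s \<in> f ` S" "r < s"
  then obtain x y where "x \<in> S" "y \<in> S" "r = f x" "s = f y" "f x < f y" by auto
  moreover have "x < y"
    using \<open>f x < f y\<close> strict_mono_on_leD[OF assms \<open>y \<in> S\<close> \<open>x \<in> S\<close>] by (cases "y \<le> x") auto
  ultimately show "inv_into S f r < inv_into S f s"
    using strict_mono_on_imp_inj_on[OF assms] by simp
qed

lemma strict_mono_on_if_derivative_ge:
  fixes f f' :: "real \<Rightarrow> real"
  assumes "\<And>t. t \<in> {a..b} \<Longrightarrow> (f has_real_derivative f' t) (at t within {a..b})"
    and "\<And>t. t \<in> {a..b} \<Longrightarrow> c \<le> f' t" and "0 < c"
  shows "strict_mono_on {a..b} f"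
proof (rule strict_mono_onI)
  fix x y assume xy: "x \<in> {a..b}" "y \<in> {a..b}" "x < y"
  have ftc: "(f' has_integral (f y - f x)) {x..y}"
  proof (rule fundamental_theorem_of_calculus)
    fix t assume "t \<in> {x..y}"
    with xy have "t \<in> {a..b}" "{x..y} \<subseteq> {a..b}" by auto
    then have "(f has_real_derivative f' t) (at t within {x..y})"
      using has_field_derivative_subset[OF assms(1)] by blast
    then show "(f has_vector_derivative f' t) (at t within {x..y})"
      by (simp add: has_real_derivative_iff_has_vector_derivative)
  qed (use xy in simp)
  have "((\<lambda>_. c) has_integral (y - x) * c) {x..y}"
    using has_integral_const_real[of c x y] xy by simp
  then have "(y - x) * c \<le> f y - f x"
    by (rule has_integral_le[OF _ ftc]) (use assms(2) xy in auto)
  moreover have "0 < (y - x) * c" using xy \<open>0 < c\<close> by simp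
  ultimately show "f x < f y" by simp
qed

lemma finite_family_bounded:
  fixes f :: "'i \<Rightarrow> 'a::topological_space \<Rightarrow> real"
  assumes "finite I" "compact S" "\<And>i. i \<in> I \<Longrightarrow> continuous_on S (f i)"
  obtains B where "\<And>i t. i \<in> I \<Longrightarrow> t \<in> S \<Longrightarrow> \<bar>f i t\<bar> \<le> B"
proof -
  have "bounded ((\<lambda>t. \<Sum>i\<in>I. \<bar>f i t\<bar>) ` S)"
    using assms by (intro compact_imp_bounded compact_continuous_image continuous_intros) auto
  then obtain B where B: "\<And>t. t \<in> S \<Longrightarrow> \<bar>\<Sum>i\<in>I. \<bar>f i t\<bar>\<bar> \<le> B"
    unfolding bounded_iff by auto
  have "\<bar>f i t\<bar> \<le> B" if "i \<in> I" "t \<in> S" for i t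
    using member_le_sum[of i I "\<lambda>i. \<bar>f i t\<bar>"] B[OF that(2)] assms(1) that(1) by simp
  then show ?thesis using that by blast
qed

lemma abs_integral_mult_le:
  fixes f g :: "real \<Rightarrow> real"
  assumes "a \<le> b" "continuous_on {a..b} f" "continuous_on {a..b} g"
    and "\<And>t. t \<in> {a..b} \<Longrightarrow> \<bar>f t\<bar> \<le> B" "\<And>t. t \<in> {a..b} \<Longrightarrow> \<bar>g t\<bar> \<le> B"
  shows "\<bar>integral {a..b} (\<lambda>t. f t * g t)\<bar> \<le> B * B * (b - a)"
proof -
  have "\<bar>f t * g t\<bar> \<le> B * B" if "t \<in> {a..b}" for t
    using assms(4,5)[OF that] by (simp add: abs_mult mult_mono')
  then show ?thesis
    using integral_bound[of a b "\<lambda>t. f t * g t" "B * B"] assms(1-3) by (simp add: continuous_on_mult)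
qed

section \<open>Increasing homeomorphisms of the interval\<close>

lemma homG_image_eq:
  assumes "f \<in> homG"
  shows "f ` {-1..1} = {-1..1}"
proof -
  have "y \<in> f ` {-1..1}" if "y \<in> {-1..1}" for y
    using IVT'[of f "-1" y 1] assms that unfolding homG_def by fastforce
  then show ?thesis using assms unfolding homG_def by auto
qed

lemma homG_comp:
  assumes f: "f \<in> homG" and g: "g \<in> homG"
  shows "g \<circ> f \<in> homG"
proof -
  have "continuous_on {-1..1} (g \<circ> f)"
    using f g unfolding homG_def by (auto intro: continuous_on_compose2)
  moreover have "strict_mono_on {-1..1} (g \<circ> f)"
  proof (rule strict_mono_onI)
    fix r s :: real assume "r \<in> {-1..1}" "s \<in> {-1..1}" "r < s"
    then show "(g \<circ> f) r < (g \<circ> f) s"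
      using f g unfolding homG_def by (auto intro!: strict_mono_onD[of "{-1..1}" g] strict_mono_onD[of "{-1..1}" f])
  qed
  ultimately show ?thesis using f g unfolding homG_def by auto
qed

lemma homG_inv_into:
  assumes f: "f \<in> homG"
  shows "inv_into {-1..1} f \<in> homG"
proof -
  let ?S = "{-1..1::real}" and ?\<phi> = "inv_into {-1..1} f"
  have im: "f ` ?S = ?S" using homG_image_eq[OF f] .
  have sm: "strict_mono_on ?S f" and e: "f (-1) = -1" "f 1 = 1"
    using f unfolding homG_def by auto
  have inv_f: "?\<phi> (f x) = x" if "x \<in> ?S" for x
    using inv_into_f_f[OF strict_mono_on_imp_inj_on[OF sm] that] .
  have "continuous_on ?S ?\<phi>"
    using continuous_on_inv[of ?S f ?\<phi>] f inv_f im unfolding homG_def by auto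
  moreover have "strict_mono_on ?S ?\<phi>"
    using strict_mono_on_inv_into[OF sm] im by simp
  moreover have "?\<phi> ` ?S \<subseteq> ?S"
    using inv_into_into[of _ f ?S] im by auto
  ultimately show ?thesis
    using inv_f[of "-1"] inv_f[of 1] e unfolding homG_def by simp
qed

lemma homG_if_derivative_ge:
  fixes f f' :: "real \<Rightarrow> real"
  assumes "\<And>t. t \<in> {-1..1} \<Longrightarrow> (f has_real_derivative f' t) (at t within {-1..1})"
    and "\<And>t. t \<in> {-1..1} \<Longrightarrow> c \<le> f' t" and "0 < c"
    and "f (-1) = -1" "f 1 = 1"
  shows "f \<in> homG"
proof -
  have sm: "strict_mono_on {-1..1} f"
    by (rule strict_mono_on_if_derivative_ge) (use assms in auto)
  then have "f t \<in> {-1..1}" if "t \<in> {-1..1}" for t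
    using strict_mono_on_leD[OF sm, of "-1" t] strict_mono_on_leD[OF sm, of t 1] that assms
    by auto
  then show ?thesis
    using sm assms DERIV_continuous_on[OF assms(1)] unfolding homG_def by auto
qed

lemma has_integral_comp_inv_into:
  assumes f: "f \<in> homG"
    and f': "\<And>t. t \<in> {-1..1} \<Longrightarrow> (f has_real_derivative f' t) (at t within {-1..1})"
    and g: "continuous_on {-1..1} g"
  shows "((\<lambda>x. f' x * g x) has_integral integral {-1..1} (g \<circ> inv_into {-1..1} f)) {-1..1}"
proof -
  let ?S = "{-1..1::real}" and ?\<phi> = "inv_into {-1..1} f"
  have im: "f ` ?S = ?S" using homG_image_eq[OF f] .
  have inj: "inj_on f ?S" using f strict_mono_on_imp_inj_on unfolding homG_def by auto
  have ends: "f (-1) = -1" "f 1 = 1" using f unfolding homG_def by auto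
  have "continuous_on ?S (g \<circ> ?\<phi>)"
    using homG_inv_into[OF f] g unfolding homG_def by (auto intro: continuous_on_compose2)
  then have "((\<lambda>x. f' x *\<^sub>R (g \<circ> ?\<phi>) (f x)) has_integral integral ?S (g \<circ> ?\<phi>)) ?S"
    using has_integral_substitution[of "-1" 1 f "-1" 1 "g \<circ> ?\<phi>" f'] f' im ends by simp
  then show ?thesis
    by (rule has_integral_eq[rotated]) (simp add: inv_into_f_f[OF inj])
qed

section \<open>Perturbed primitives of symmetric densities\<close>

definition symmetric_density :: "(real \<Rightarrow> real) \<Rightarrow> bool" where
  "symmetric_density q \<longleftrightarrow> continuous_on {-1..1} q \<and> (\<forall>t\<in>{-1..1}. q (-t) = q t)
     \<and> integral {-1..1} q = 2"

definition centred_primitive :: "(real \<Rightarrow> real) \<Rightarrow> real \<Rightarrow> real" where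
  "centred_primitive q t = integral {-1..t} q - 1"

lemma has_real_derivative_centred_primitive:
  assumes "continuous_on {-1..1} q" "t \<in> {-1..1}"
  shows "(centred_primitive q has_real_derivative q t) (at t within {-1..1})"
  using DERIV_diff[OF integral_has_real_derivative[OF assms] DERIV_const[of 1]]
  by (simp add: centred_primitive_def[abs_def])

lemma continuous_on_centred_primitive:
  "continuous_on {-1..1} q \<Longrightarrow> continuous_on {-1..1} (centred_primitive q)"
  using DERIV_continuous_on has_real_derivative_centred_primitive by blast

lemma centred_primitive_minus:
  assumes q: "symmetric_density q" and t: "t \<in> {-1..1}"
  shows "centred_primitive q (-t) = - centred_primitive q t"
proof -
  have cont: "continuous_on {-1..1} q" and even: "\<forall>t\<in>{-1..1}. q (-t) = q t"
    and mass: "integral {-1..1} q = 2"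
    using q unfolding symmetric_density_def by auto
  have "integral {-1..-t} q = integral {-1..-t} (\<lambda>s. q (-s))"
    by (rule integral_cong) (use even t in auto)
  also have "\<dots> = integral {t..1} q"
    by (rule Henstock_Kurzweil_Integration.integral_reflect_real)
  finally have "integral {-1..-t} q = integral {t..1} q" .
  moreover have "integral {-1..t} q + integral {t..1} q = 2"
    using Henstock_Kurzweil_Integration.integral_combine[of "-1" t 1 q] t mass
      integrable_continuous_interval[OF cont] by simp
  ultimately show ?thesis unfolding centred_primitive_def by simp
qed

lemma centred_primitive_endpoints:
  assumes "symmetric_density q"
  shows "centred_primitive q (-1) = -1" "centred_primitive q 1 = 1"
  using assms unfolding centred_primitive_def symmetric_density_def by auto

lemma oint_eq_centred_primitive:
  assumes q: "symmetric_density q" and t: "t \<in> {-1..1}"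
  shows "oint q 0 t = centred_primitive q t"
proof -
  have cont: "continuous_on {-1..1} q" using q unfolding symmetric_density_def by simp
  have "centred_primitive q 0 = 0" using centred_primitive_minus[OF q, of 0] by simp
  then have half: "integral {-1..0} q = 1" unfolding centred_primitive_def by simp
  have intg: "q integrable_on {a..b}" if "-1 \<le> a" "b \<le> 1" for a b
    by (rule integrable_continuous_interval, rule continuous_on_subset[OF cont]) (use that in auto)
  show ?thesis
  proof (cases "0 \<le> t")
    case True
    then show ?thesis
      using Henstock_Kurzweil_Integration.integral_combine[of "-1" 0 t q] intg[of "-1" t] t half
      unfolding oint_def centred_primitive_def by simp
  next
    case False
    then show ?thesis
      using Henstock_Kurzweil_Integration.integral_combine[of "-1" t 0 q] intg[of "-1" 0] t half
      unfolding oint_def centred_primitive_def by simp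
  qed
qed

lemma integral_centred_primitive:
  "symmetric_density q \<Longrightarrow> integral {-1..1} (centred_primitive q) = 0"
  using integral_odd_eq_0[of 1 "centred_primitive q"] centred_primitive_minus by simp

definition C1_vanishing_at_ends :: "(real \<Rightarrow> real) \<Rightarrow> (real \<Rightarrow> real) \<Rightarrow> bool" where
  "C1_vanishing_at_ends h h' \<longleftrightarrow> continuous_on {-1..1} h'
     \<and> (\<forall>t\<in>{-1..1}. (h has_real_derivative h' t) (at t within {-1..1})) \<and> h (-1) = 0 \<and> h 1 = 0"

definition perturbed_primitive :: "(real \<Rightarrow> real) \<Rightarrow> real \<Rightarrow> (real \<Rightarrow> real) \<Rightarrow> real \<Rightarrow> real" where
  "perturbed_primitive q \<delta> h t = centred_primitive q t + \<delta> * h t"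

lemma C1_vanishing_at_ends_continuous_on:
  "C1_vanishing_at_ends h h' \<Longrightarrow> continuous_on {-1..1} h"
  unfolding C1_vanishing_at_ends_def using DERIV_continuous_on by blast

lemma has_real_derivative_perturbed_primitive:
  assumes "continuous_on {-1..1} q" "C1_vanishing_at_ends h h'" "t \<in> {-1..1}"
  shows "(perturbed_primitive q \<delta> h has_real_derivative q t + \<delta> * h' t) (at t within {-1..1})"
  using assms unfolding perturbed_primitive_def[abs_def] C1_vanishing_at_ends_def
  by (intro DERIV_add DERIV_cmult has_real_derivative_centred_primitive) auto

lemma continuous_on_perturbed_primitive:
  assumes "continuous_on {-1..1} q" "C1_vanishing_at_ends h h'"
  shows "continuous_on {-1..1} (perturbed_primitive q \<delta> h)"
  by (rule DERIV_continuous_on[OF has_real_derivative_perturbed_primitive[OF assms]])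

lemma perturbed_primitive_in_homG0:
  assumes q: "symmetric_density q" and h: "C1_vanishing_at_ends h h'" "(h has_integral 0) {-1..1}"
    and pos: "\<And>t. t \<in> {-1..1} \<Longrightarrow> c \<le> q t + \<delta> * h' t" "0 < c"
  shows "perturbed_primitive q \<delta> h \<in> homG0"
proof -
  have cont: "continuous_on {-1..1} q" using q unfolding symmetric_density_def by simp
  have "perturbed_primitive q \<delta> h \<in> homG"
    using has_real_derivative_perturbed_primitive[OF cont h(1)] pos
      centred_primitive_endpoints[OF q] h(1)
    by (intro homG_if_derivative_ge) (auto simp: perturbed_primitive_def C1_vanishing_at_ends_def)
  moreover have "(centred_primitive q has_integral 0) {-1..1}"
    using integral_centred_primitive[OF q] integrable_continuous_interval
      continuous_on_centred_primitive[OF cont] by (metis integrable_integral)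
  then have "(perturbed_primitive q \<delta> h has_integral 0 + \<delta> * 0) {-1..1}"
    unfolding perturbed_primitive_def[abs_def]
    by (intro has_integral_add has_integral_mult_right h(2))
  ultimately show ?thesis unfolding homG0_def by (simp add: integral_unique)
qed

lemma SUP_dist_oint_perturbed_primitive_less:
  assumes "symmetric_density q" "\<And>t. t \<in> {-1..1} \<Longrightarrow> \<bar>\<delta> * h t\<bar> \<le> c" "c < \<epsilon>"
  shows "(SUP t\<in>{-1..1}. \<bar>perturbed_primitive q \<delta> h t - oint q 0 t\<bar>) < \<epsilon>"
proof -
  have "(SUP t\<in>{-1..1}. \<bar>perturbed_primitive q \<delta> h t - oint q 0 t\<bar>) \<le> c"
    using assms(1,2) by (intro cSUP_least) (auto simp: oint_eq_centred_primitive perturbed_primitive_def)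
  then show ?thesis using assms(3) by simp
qed

lemma has_integral_perturbed_product:
  assumes qi: "symmetric_density qi" and qj: "symmetric_density qj"
    and h: "C1_vanishing_at_ends h h'" and k: "continuous_on {-1..1} k"
  shows "((\<lambda>x. (qi x + \<delta> * h' x) * perturbed_primitive qj \<delta> k x) has_integral
           \<delta> * (integral {-1..1} (\<lambda>x. qi x * k x) - integral {-1..1} (\<lambda>x. qj x * h x))
           + \<delta>\<^sup>2 * integral {-1..1} (\<lambda>x. h' x * k x)) {-1..1}"
proof -
  let ?S = "{-1..1::real}" and ?G = "centred_primitive qj"
  have ci: "continuous_on ?S qi" and even: "\<forall>t\<in>?S. qi (-t) = qi t"
    and cj: "continuous_on ?S qj"
    using qi qj unfolding symmetric_density_def by auto
  have cG: "continuous_on ?S ?G" by (rule continuous_on_centred_primitive[OF cj])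
  have ch: "continuous_on ?S h" "continuous_on ?S h'"
    using h C1_vanishing_at_ends_continuous_on unfolding C1_vanishing_at_ends_def by auto
  have intg: "(f has_integral integral ?S f) ?S" if "continuous_on ?S f" for f :: "real \<Rightarrow> real"
    using integrable_continuous_interval[OF that] by (rule integrable_integral)
  have "integral ?S (\<lambda>x. qi x * ?G x) = 0"
    using even centred_primitive_minus[OF qj] by (intro integral_odd_eq_0) simp
  then have T1: "((\<lambda>x. qi x * ?G x) has_integral 0) ?S"
    using intg[of "\<lambda>x. qi x * ?G x"] ci cG by (simp add: continuous_on_mult)
  have T2: "((\<lambda>x. qi x * k x) has_integral integral ?S (\<lambda>x. qi x * k x)) ?S"
    using ci k by (intro intg continuous_intros)
  have T3: "((\<lambda>x. h' x * ?G x) has_integral - integral ?S (\<lambda>x. qj x * h x)) ?S"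
    using h cj ch has_real_derivative_centred_primitive[OF cj]
    by (intro has_integral_derivative_mult_vanishing) (auto simp: C1_vanishing_at_ends_def)
  have T4: "((\<lambda>x. h' x * k x) has_integral integral ?S (\<lambda>x. h' x * k x)) ?S"
    using ch k by (intro intg continuous_intros)
  have "((\<lambda>x. qi x * ?G x + \<delta> * (qi x * k x) + \<delta> * (h' x * ?G x) + \<delta>\<^sup>2 * (h' x * k x))
          has_integral 0 + \<delta> * integral ?S (\<lambda>x. qi x * k x) + \<delta> * - integral ?S (\<lambda>x. qj x * h x)
            + \<delta>\<^sup>2 * integral ?S (\<lambda>x. h' x * k x)) ?S"
    by (intro has_integral_add has_integral_mult_right T1 T2 T3 T4)
  then show ?thesis
    unfolding perturbed_primitive_def
    by (simp add: algebra_simps power2_eq_square)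
qed

lemma integral_comp_inv_into_perturbed_primitive:
  assumes qi: "symmetric_density qi" and qj: "symmetric_density qj"
    and hi: "C1_vanishing_at_ends hi hi'" and hj: "C1_vanishing_at_ends hj hj'"
    and F: "perturbed_primitive qi \<delta> hi \<in> homG"
  shows "integral {-1..1} (perturbed_primitive qj \<delta> hj \<circ> inv_into {-1..1} (perturbed_primitive qi \<delta> hi))
           = \<delta> * (integral {-1..1} (\<lambda>x. qi x * hj x) - integral {-1..1} (\<lambda>x. qj x * hi x))
             + \<delta>\<^sup>2 * integral {-1..1} (\<lambda>x. hi' x * hj x)"
proof -
  have ci: "continuous_on {-1..1} qi" and cj: "continuous_on {-1..1} qj"
    using qi qj unfolding symmetric_density_def by auto
  show ?thesis
    using has_integral_comp_inv_into[OF F has_real_derivative_perturbed_primitive[OF ci hi]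
        continuous_on_perturbed_primitive[OF cj hj]]
      has_integral_perturbed_product[OF qi qj hi C1_vanishing_at_ends_continuous_on[OF hj]]
    by (rule has_integral_unique)
qed

lemma comp_inv_into_perturbed_primitive_in_homGplus_iff:
  assumes qi: "symmetric_density qi" and qj: "symmetric_density qj"
    and hi: "C1_vanishing_at_ends hi hi'" and hj: "C1_vanishing_at_ends hj hj'"
    and Fi: "perturbed_primitive qi \<delta> hi \<in> homG" and Fj: "perturbed_primitive qj \<delta> hj \<in> homG"
    and "0 < \<delta>"
    and small: "\<delta> * \<bar>integral {-1..1} (\<lambda>x. hi' x * hj x)\<bar>
                  < \<bar>integral {-1..1} (\<lambda>x. qi x * hj x) - integral {-1..1} (\<lambda>x. qj x * hi x)\<bar>"
  shows "perturbed_primitive qj \<delta> hj \<circ> inv_into {-1..1} (perturbed_primitive qi \<delta> hi) \<in> homGplus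
           \<longleftrightarrow> 0 < integral {-1..1} (\<lambda>x. qi x * hj x) - integral {-1..1} (\<lambda>x. qj x * hi x)"
proof -
  define \<sigma> where "\<sigma> = integral {-1..1} (\<lambda>x. qi x * hj x) - integral {-1..1} (\<lambda>x. qj x * hi x)"
  define I where "I = integral {-1..1} (\<lambda>x. hi' x * hj x)"
  have "integral {-1..1} (perturbed_primitive qj \<delta> hj \<circ> inv_into {-1..1} (perturbed_primitive qi \<delta> hi))
          = \<delta> * (\<sigma> + \<delta> * I)"
    using integral_comp_inv_into_perturbed_primitive[OF qi qj hi hj Fi]
    unfolding \<sigma>_def I_def by (simp add: algebra_simps power2_eq_square)
  moreover have "\<bar>\<delta> * I\<bar> < \<bar>\<sigma>\<bar>"
    using small \<open>0 < \<delta>\<close> unfolding \<sigma>_def[symmetric] I_def[symmetric] by (simp add: abs_mult)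
  then have "0 < \<sigma> + \<delta> * I \<longleftrightarrow> 0 < \<sigma>" by arith
  ultimately show ?thesis
    using homG_comp[OF homG_inv_into[OF Fi] Fj] \<open>0 < \<delta>\<close> unfolding homGplus_def \<sigma>_def[symmetric]
    by (simp add: zero_less_mult_iff)
qed

section \<open>Special sequences\<close>

lemma C1_on_interval_continuous_on: "C1_on_interval f \<Longrightarrow> continuous_on {-1..1} f"
  unfolding C1_on_interval_def by (metis DERIV_continuous_on)

lemma C1_on_interval_sum:
  assumes "\<forall>k\<in>K. C1_on_interval (f k)"
  shows "C1_on_interval (\<lambda>t. \<Sum>k\<in>K. c k * f k t)"
proof -
  obtain D where D: "\<forall>k\<in>K. continuous_on {-1..1} (D k)
      \<and> (\<forall>t\<in>{-1..1}. (f k has_real_derivative D k t) (at t within {-1..1}))"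
    using assms unfolding C1_on_interval_def by metis
  then show ?thesis
    unfolding C1_on_interval_def
    by (intro exI[of _ "\<lambda>t. \<Sum>k\<in>K. c k * D k t"]) (auto intro!: continuous_intros DERIV_sum DERIV_cmult)
qed

lemma special_sequence_continuous_on:
  "special_sequence p \<Longrightarrow> continuous_on {-1..1} (p k)"
  unfolding special_sequence_def by (blast intro: C1_on_interval_continuous_on)

lemma special_sequence_has_integral_0:
  assumes p: "special_sequence p" and "0 < k"
  shows "(p k has_integral 0) {-1..1}"
proof -
  have "integral {-1..1} (p k) = integral {-1..1} (\<lambda>t. p k t * p 0 t)"
    using p unfolding special_sequence_def by (intro integral_cong) auto
  also have "\<dots> = 0" using p \<open>0 < k\<close> unfolding special_sequence_def by simp
  finally show ?thesis
    using integrable_integral[OF integrable_continuous_interval[OF special_sequence_continuous_on[OF p, of k]]]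
    by simp
qed

lemma special_sequence_norm_pos:
  assumes p: "special_sequence p"
  shows "0 < integral {-1..1} (\<lambda>t. p k t * p k t)"
proof -
  have c: "continuous_on {-1..1} (\<lambda>t. p k t * p k t)"
    using special_sequence_continuous_on[OF p] by (intro continuous_intros)
  obtain t where "t \<in> {-1..1}" "p k t \<noteq> 0" using p unfolding special_sequence_def by blast
  then have "integral {-1..1} (\<lambda>t. p k t * p k t) \<noteq> 0"
    using integral_eq_0_iff[OF c] by auto
  moreover have "0 \<le> integral {-1..1} (\<lambda>t. p k t * p k t)"
    by (rule integral_nonneg[OF integrable_continuous_interval[OF c]]) simp
  ultimately show ?thesis by simp
qed

lemma special_sequence_symmetric_density:
  assumes p: "special_sequence p" and "0 < k"
  shows "symmetric_density (\<lambda>t. 1 + p k t)"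
proof -
  have "((\<lambda>t. 1 + p k t) has_integral 2 + 0) {-1..1}"
    using has_integral_const_real[of "1::real" "-1" 1] special_sequence_has_integral_0[OF assms]
    by (intro has_integral_add) simp_all
  then show ?thesis
    using p special_sequence_continuous_on[OF p] unfolding symmetric_density_def special_sequence_def
    by (auto simp: integral_unique intro: continuous_intros)
qed

lemma perturbed_special_primitive:
  assumes p: "special_sequence p" "0 < i"
    and h: "C1_vanishing_at_ends h h'" "(h has_integral 0) {-1..1}"
    and small: "\<And>t. t \<in> {-1..1} \<Longrightarrow> \<bar>\<delta> * h' t\<bar> \<le> 1/12"
  shows "perturbed_primitive (\<lambda>s. 1 + p i s) \<delta> h \<in> homG0"
    and "\<And>t. t \<in> {-1..1} \<Longrightarrow>
      (perturbed_primitive (\<lambda>s. 1 + p i s) \<delta> h has_real_derivative 1 + p i t + \<delta> * h' t)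
        (at t within {-1..1}) \<and> 1/3 < 1 + p i t + \<delta> * h' t \<and> 1 + p i t + \<delta> * h' t < 3"
proof -
  have q: "symmetric_density (\<lambda>s. 1 + p i s)"
    by (rule special_sequence_symmetric_density[OF p])
  have bounds: "1/3 < 1 + p i t + \<delta> * h' t \<and> 1 + p i t + \<delta> * h' t < 3" if "t \<in> {-1..1}" for t
  proof -
    have "\<bar>p i t\<bar> \<le> 1/2" using p that unfolding special_sequence_def by auto
    then show ?thesis using small[OF that] by (auto simp: abs_le_iff)
  qed
  have "1/3 \<le> 1 + p i t + \<delta> * h' t" if "t \<in> {-1..1}" for t
    using bounds[OF that] by linarith
  then show "perturbed_primitive (\<lambda>s. 1 + p i s) \<delta> h \<in> homG0"
    by (intro perturbed_primitive_in_homG0[OF q h, where c = "1/3"]) auto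
  show "(perturbed_primitive (\<lambda>s. 1 + p i s) \<delta> h has_real_derivative 1 + p i t + \<delta> * h' t)
      (at t within {-1..1}) \<and> 1/3 < 1 + p i t + \<delta> * h' t \<and> 1 + p i t + \<delta> * h' t < 3"
    if "t \<in> {-1..1}" for t
  proof -
    have "continuous_on {-1..1} (\<lambda>s. 1 + p i s)" using q unfolding symmetric_density_def by simp
    from has_real_derivative_perturbed_primitive[OF this h(1) that]
    show ?thesis using bounds[OF that] by simp
  qed
qed

lemma has_integral_special_sequence_sum_0:
  assumes "special_sequence p" "finite K" "0 \<notin> K"
  shows "((\<lambda>t. \<Sum>k\<in>K. c k * p k t) has_integral 0) {-1..1}"
proof -
  have "(p k has_integral 0) {-1..1}" if "k \<in> K" for k
    using special_sequence_has_integral_0[OF assms(1)] that assms(3) by (metis gr0I)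
  then have "((\<lambda>t. \<Sum>k\<in>K. c k * p k t) has_integral (\<Sum>k\<in>K. c k * 0)) {-1..1}"
    using assms(2) by (intro has_integral_sum has_integral_mult_right) auto
  then show ?thesis by simp
qed

lemma has_integral_special_sequence_inner:
  assumes p: "special_sequence p" and K: "finite K" "0 \<notin> K"
  shows "((\<lambda>t. (1 + p j t) * (\<Sum>k\<in>K. c k * p k t)) has_integral
           (if j \<in> K then c j * integral {-1..1} (\<lambda>t. p j t * p j t) else 0)) {-1..1}"
proof -
  have "((\<lambda>t. c k * (p j t * p k t)) has_integral
          (if k = j then c j * integral {-1..1} (\<lambda>t. p j t * p j t) else 0)) {-1..1}" for k
  proof -
    have "((\<lambda>t. p j t * p k t) has_integral integral {-1..1} (\<lambda>t. p j t * p k t)) {-1..1}"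
      using special_sequence_continuous_on[OF p]
      by (intro integrable_integral integrable_continuous_interval continuous_intros)
    then have "((\<lambda>t. p j t * p k t) has_integral (if k = j then integral {-1..1} (\<lambda>t. p j t * p j t) else 0))
        {-1..1}"
      using p unfolding special_sequence_def by (cases "k = j") auto
    then show ?thesis by (cases "k = j") (auto dest: has_integral_mult_right[where c = "c k"])
  qed
  then have "((\<lambda>t. \<Sum>k\<in>K. c k * (p j t * p k t)) has_integral
      (\<Sum>k\<in>K. if k = j then c j * integral {-1..1} (\<lambda>t. p j t * p j t) else 0)) {-1..1}"
    using K(1) by (intro has_integral_sum) auto
  then have "((\<lambda>t. \<Sum>k\<in>K. c k * (p j t * p k t)) has_integral
      (if j \<in> K then c j * integral {-1..1} (\<lambda>t. p j t * p j t) else 0)) {-1..1}"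
    by (simp add: sum.delta[OF K(1)])
  then have "((\<lambda>t. (\<Sum>k\<in>K. c k * p k t) + (\<Sum>k\<in>K. c k * (p j t * p k t))) has_integral
      0 + (if j \<in> K then c j * integral {-1..1} (\<lambda>t. p j t * p j t) else 0)) {-1..1}"
    by (intro has_integral_add has_integral_special_sequence_sum_0[OF p K])
  from this[unfolded add_0_left] show ?thesis
    by (rule has_integral_eq[rotated]) (simp add: algebra_simps sum.distrib sum_distrib_left)
qed

definition tournament_sign :: "(nat \<times> nat) set \<Rightarrow> nat \<Rightarrow> nat \<Rightarrow> real" where
  "tournament_sign R i j = (if (i, j) \<in> R then 1 else -1)"

definition tournament_correction ::
    "(nat \<Rightarrow> real \<Rightarrow> real) \<Rightarrow> (nat \<times> nat) set \<Rightarrow> nat \<Rightarrow> nat \<Rightarrow> real \<Rightarrow> real" where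
  "tournament_correction p R n i t =
     (\<Sum>k\<in>{1..n} - {i}. tournament_sign R k i / (2 * integral {-1..1} (\<lambda>s. p k s * p k s)) * p k t)"

lemma tournament_correction_C1_vanishing_at_ends:
  assumes "special_sequence p"
  shows "\<exists>h'. C1_vanishing_at_ends (tournament_correction p R n i) h'"
proof -
  have "\<forall>k. C1_on_interval (p k)" using assms unfolding special_sequence_def by blast
  then have "C1_on_interval (tournament_correction p R n i)"
    unfolding tournament_correction_def[abs_def] by (intro C1_on_interval_sum) auto
  then obtain h' where "continuous_on {-1..1} h'"
    "\<forall>t\<in>{-1..1}. (tournament_correction p R n i has_real_derivative h' t) (at t within {-1..1})"
    unfolding C1_on_interval_def by blast
  moreover have "tournament_correction p R n i (-1) = 0" "tournament_correction p R n i 1 = 0"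
    using assms unfolding tournament_correction_def special_sequence_def by auto
  ultimately show ?thesis unfolding C1_vanishing_at_ends_def by blast
qed

lemma tournament_correction_has_integral_0:
  "special_sequence p \<Longrightarrow> (tournament_correction p R n i has_integral 0) {-1..1}"
  unfolding tournament_correction_def[abs_def] by (rule has_integral_special_sequence_sum_0) auto

lemma inner_tournament_correction_diff:
  assumes p: "special_sequence p" and R: "tournament n R"
    and ij: "i \<in> {1..n}" "j \<in> {1..n}" "i \<noteq> j"
  shows "integral {-1..1} (\<lambda>t. (1 + p i t) * tournament_correction p R n j t)
           - integral {-1..1} (\<lambda>t. (1 + p j t) * tournament_correction p R n i t)
         = tournament_sign R i j"
proof -
  let ?N = "\<lambda>k. integral {-1..1} (\<lambda>s. p k s * p k s)"
  have inner: "integral {-1..1} (\<lambda>t. (1 + p a t) * tournament_correction p R n b t)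
                 = tournament_sign R a b / 2" if "a \<in> {1..n}" "b \<in> {1..n}" "a \<noteq> b" for a b
  proof -
    have "((\<lambda>t. (1 + p a t) * tournament_correction p R n b t) has_integral
            tournament_sign R a b / (2 * ?N a) * ?N a) {-1..1}"
      using has_integral_special_sequence_inner[OF p, of "{1..n} - {b}" a
          "\<lambda>k. tournament_sign R k b / (2 * ?N k)"] that
      unfolding tournament_correction_def by simp
    then show ?thesis using special_sequence_norm_pos[OF p, of a] by (simp add: integral_unique)
  qed
  have "(i, j) \<in> R \<longleftrightarrow> (j, i) \<notin> R" using R ij unfolding tournament_def by blast
  then have "tournament_sign R j i = - tournament_sign R i j" by (simp add: tournament_sign_def)
  then show ?thesis using inner[OF ij] inner[of j i] ij by simp
qed

lemma tournament_perturbation_in_homGplus_iff: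
  assumes p: "special_sequence p" and R: "tournament n R" and ij: "i \<in> {1..n}" "j \<in> {1..n}" "i \<noteq> j"
    and h': "C1_vanishing_at_ends (tournament_correction p R n i) h'"
      "C1_vanishing_at_ends (tournament_correction p R n j) h''"
    and homG: "perturbed_primitive (\<lambda>s. 1 + p i s) \<delta> (tournament_correction p R n i) \<in> homG"
      "perturbed_primitive (\<lambda>s. 1 + p j s) \<delta> (tournament_correction p R n j) \<in> homG"
    and "0 < \<delta>" and small: "\<delta> * \<bar>integral {-1..1} (\<lambda>t. h' t * tournament_correction p R n j t)\<bar> < 1"
  shows "perturbed_primitive (\<lambda>s. 1 + p j s) \<delta> (tournament_correction p R n j)
           \<circ> inv_into {-1..1} (perturbed_primitive (\<lambda>s. 1 + p i s) \<delta> (tournament_correction p R n i))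
           \<in> homGplus \<longleftrightarrow> (i, j) \<in> R"
proof -
  note diff = inner_tournament_correction_diff[OF p R ij]
  have "\<bar>integral {-1..1} (\<lambda>t. (1 + p i t) * tournament_correction p R n j t)
         - integral {-1..1} (\<lambda>t. (1 + p j t) * tournament_correction p R n i t)\<bar> = 1"
    unfolding diff by (simp add: tournament_sign_def)
  then show ?thesis
    using comp_inv_into_perturbed_primitive_in_homGplus_iff[OF
        special_sequence_symmetric_density[OF p] special_sequence_symmetric_density[OF p]
        h' homG \<open>0 < \<delta>\<close>] small ij diff
    by (simp add: tournament_sign_def)
qed

lemma tournament_correction_bounded:
  assumes "special_sequence p"
  obtains h' B where "\<And>i. C1_vanishing_at_ends (tournament_correction p R n i) (h' i)" "1 \<le> B"
    "\<And>i t. i \<in> {1..n} \<Longrightarrow> t \<in> {-1..1} \<Longrightarrow>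
       \<bar>tournament_correction p R n i t\<bar> \<le> B \<and> \<bar>h' i t\<bar> \<le> B"
    "\<And>i j. i \<in> {1..n} \<Longrightarrow> j \<in> {1..n} \<Longrightarrow>
       \<bar>integral {-1..1} (\<lambda>t. h' i t * tournament_correction p R n j t)\<bar> \<le> B * 2 * B"
proof -
  obtain h' where h': "\<And>i. C1_vanishing_at_ends (tournament_correction p R n i) (h' i)"
    using tournament_correction_C1_vanishing_at_ends[OF assms] by metis
  have cont: "continuous_on {-1..1} (tournament_correction p R n i)" "continuous_on {-1..1} (h' i)" for i
    using h' C1_vanishing_at_ends_continuous_on unfolding C1_vanishing_at_ends_def by blast+
  obtain B1 where B1: "\<And>i t. i \<in> {1..n} \<Longrightarrow> t \<in> {-1..1} \<Longrightarrow> \<bar>tournament_correction p R n i t\<bar> \<le> B1"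
    using finite_family_bounded[of "{1..n}" "{-1..1::real}" "tournament_correction p R n"] cont by auto
  obtain B2 where B2: "\<And>i t. i \<in> {1..n} \<Longrightarrow> t \<in> {-1..1} \<Longrightarrow> \<bar>h' i t\<bar> \<le> B2"
    using finite_family_bounded[of "{1..n}" "{-1..1::real}" h'] cont by auto
  define B where "B = max 1 (max B1 B2)"
  have B: "\<bar>tournament_correction p R n i t\<bar> \<le> B \<and> \<bar>h' i t\<bar> \<le> B"
    if "i \<in> {1..n}" "t \<in> {-1..1}" for i t
    using B1[OF that] B2[OF that] unfolding B_def by linarith
  have "\<bar>integral {-1..1} (\<lambda>t. h' i t * tournament_correction p R n j t)\<bar> \<le> B * 2 * B"
    if "i \<in> {1..n}" "j \<in> {1..n}" for i j
    using abs_integral_mult_le[of "-1" 1 "h' i" "tournament_correction p R n j" B] cont B that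
    by (simp add: mult_ac)
  moreover have "1 \<le> B" unfolding B_def by simp
  ultimately show ?thesis using that[OF h'] B by blast
qed

lemma small_perturbation_scale:
  fixes \<epsilon> B :: real
  assumes "0 < \<epsilon>" "1 \<le> B"
  obtains \<delta> where "0 < \<delta>" "\<delta> * B < \<epsilon>" "\<delta> * B \<le> 1/12" "\<delta> * (B * 2 * B) < 1"
proof
  let ?\<delta> = "min \<epsilon> 1 / (12 * B * B)"
  have m: "0 < min \<epsilon> 1" "min \<epsilon> 1 \<le> \<epsilon>" "min \<epsilon> 1 \<le> 1" using assms by auto
  have "0 < ?\<delta>" using assms m by simp
  then have "?\<delta> * B * 1 \<le> ?\<delta> * B * B" using assms by (intro mult_left_mono) auto
  moreover have BB: "?\<delta> * B * B = min \<epsilon> 1 / 12" using assms by (simp add: field_simps)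
  ultimately show "?\<delta> * B < \<epsilon>" "?\<delta> * B \<le> 1/12" using m by linarith+
  have "?\<delta> * (B * 2 * B) = 2 * (?\<delta> * B * B)" by (simp only: mult_ac)
  then show "?\<delta> * (B * 2 * B) < 1" using BB m by linarith
  show "0 < ?\<delta>" by fact
qed

theorem theorem7p2:
  fixes p :: "nat \<Rightarrow> real \<Rightarrow> real" and R :: "(nat \<times> nat) set" and n :: nat and \<epsilon> :: real
  assumes "special_sequence p"
    and "tournament n R"
    and "\<epsilon> > 0"
  shows "\<exists>f :: nat \<Rightarrow> real \<Rightarrow> real.
           (\<forall>i\<in>{1..n}. f i \<in> homG0)
         \<and> (\<forall>i\<in>{1..n}. (SUP t\<in>{-1..1}. \<bar>f i t - oint (\<lambda>s. 1 + p i s) 0 t\<bar>) < \<epsilon>)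
         \<and> (\<forall>i\<in>{1..n}. \<forall>t\<in>{-1..1}. \<exists>d. (f i has_real_derivative d) (at t within {-1..1})
                                          \<and> 1/3 < d \<and> d < 3)
         \<and> (\<forall>i\<in>{1..n}. \<forall>j\<in>{1..n}. i \<noteq> j \<longrightarrow>
               ((f j \<circ> inv_into {-1..1} (f i)) \<in> homGplus \<longleftrightarrow> (i, j) \<in> R))"
proof -
  let ?h = "tournament_correction p R n" and ?q = "\<lambda>i s. 1 + p i s"
  obtain h' B where h': "\<And>i. C1_vanishing_at_ends (?h i) (h' i)" and "1 \<le> B"
    and B: "\<And>i t. i \<in> {1..n} \<Longrightarrow> t \<in> {-1..1} \<Longrightarrow> \<bar>?h i t\<bar> \<le> B \<and> \<bar>h' i t\<bar> \<le> B"
    and I: "\<And>i j. i \<in> {1..n} \<Longrightarrow> j \<in> {1..n} \<Longrightarrow>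
       \<bar>integral {-1..1} (\<lambda>t. h' i t * ?h j t)\<bar> \<le> B * 2 * B"
    using tournament_correction_bounded[OF assms(1)] by blast
  obtain \<delta> where \<delta>: "0 < \<delta>" "\<delta> * B < \<epsilon>" "\<delta> * B \<le> 1/12" "\<delta> * (B * 2 * B) < 1"
    using small_perturbation_scale[OF assms(3) \<open>1 \<le> B\<close>] by blast
  define f where "f i = perturbed_primitive (?q i) \<delta> (?h i)" for i
  have \<delta>h: "\<bar>\<delta> * ?h i t\<bar> \<le> \<delta> * B" "\<bar>\<delta> * h' i t\<bar> \<le> 1/12"
    if "i \<in> {1..n}" "t \<in> {-1..1}" for i t
  proof -
    have "\<bar>\<delta> * ?h i t\<bar> \<le> \<delta> * B" "\<bar>\<delta> * h' i t\<bar> \<le> \<delta> * B"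
      using B[OF that] \<delta>(1) by (simp_all add: abs_mult mult_left_mono)
    then show "\<bar>\<delta> * ?h i t\<bar> \<le> \<delta> * B" "\<bar>\<delta> * h' i t\<bar> \<le> 1/12" using \<delta>(3) by linarith+
  qed
  have q: "symmetric_density (?q i)" if "i \<in> {1..n}" for i
    using special_sequence_symmetric_density[OF assms(1)] that by simp
  have f: "f i \<in> homG0" "\<And>t. t \<in> {-1..1} \<Longrightarrow> (f i has_real_derivative ?q i t + \<delta> * h' i t)
      (at t within {-1..1}) \<and> 1/3 < ?q i t + \<delta> * h' i t \<and> ?q i t + \<delta> * h' i t < 3"
    if "i \<in> {1..n}" for i
    unfolding f_def using that perturbed_special_primitive[OF assms(1) _ h'[of i]
        tournament_correction_has_integral_0[OF assms(1)] \<delta>h(2)[OF that]] by auto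
  have "\<delta> * \<bar>integral {-1..1} (\<lambda>t. h' i t * ?h j t)\<bar> < 1" if "i \<in> {1..n}" "j \<in> {1..n}" for i j
    using mult_left_mono[OF I[OF that] less_imp_le[OF \<delta>(1)]] \<delta>(4) by linarith
  then have "f j \<circ> inv_into {-1..1} (f i) \<in> homGplus \<longleftrightarrow> (i, j) \<in> R"
    if "i \<in> {1..n}" "j \<in> {1..n}" "i \<noteq> j" for i j
    using tournament_perturbation_in_homGplus_iff[OF assms(1,2) that h'[of i] h'[of j] _ _ \<delta>(1)]
      f(1)[of i] f(1)[of j] that unfolding f_def homG0_def by blast
  moreover have "(SUP t\<in>{-1..1}. \<bar>f i t - oint (?q i) 0 t\<bar>) < \<epsilon>" if "i \<in> {1..n}" for i
    unfolding f_def
    by (rule SUP_dist_oint_perturbed_primitive_less[OF q[OF that] _ \<delta>(2)]) (rule \<delta>h(1)[OF that])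
  ultimately show ?thesis
    using f by (intro exI[of _ f]) blast
qed

end
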